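(* Let $(G,\sigma)$ be a signed graph, $p\ge2$, $K\in\mathbb{R}$, $N\in(0,\infty]$ and $x\in V$. Then $(G,\sigma)$ satisfies $CD_p^\sigma(K,N)$ at $x$ if and only if \[ \Gamma_{p,2}^{\sigma}(f,f)(x)\geq\frac{1}{N}(\Delta_{p}^{\sigma}f(x))^{2}+K(\Gamma^{\sigma}_{p}(f,f)(x))^{\frac{2p-2}{p}} \] holds for every function $f:V\to\mathbb{R}$.
   Context: $G=(V,E)$ is a locally finite simple graph with degrees $d_x$; $\sigma:E\to\{\pm1\}$, $\sigma_{xy}=\sigma(\{x,y\})$. For $p>1$: $\Delta_{p}^{\sigma}f(x)=\frac{1}{d_{x}}\sum_{y\sim x}|\sigma_{xy}f(y)-f(x)|^{p-2}(\sigma_{xy}f(y)-f(x))$ (with $|t|^{p-2}t=0$ at $t=0$); $\Gamma_p^\sigma(f,g)(x)=\frac{1}{2d_{x}}\sum_{y\sim x}|\sigma_{xy}f(y)-f(x)|^{p-2}(\sigma_{xy}f(y)-f(x))(\sigma_{xy}g(y)-g(x))$; $\mathscr{L}^\sigma_{p,f}\varphi(x)=\frac{1}{d_{x}}\sum_{y\sim x}|\sigma_{xy}f(y)-f(x)|^{p-2}(\varphi(y)-\varphi(x))$; $\Gamma_{p,2}^\sigma(f,f)(x)=\frac12\mathscr{L}_{p,f}^\sigma(\Gamma^\sigma_p(f,f))(x)-\Gamma_p^\sigma(f,\Delta_p^\sigma f)(x)$. $(G,\sigma)$ satisfies $CD_p^\sigma(K,N)$ at $x$ if the displayed inequality holds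 for every $f:V\to\mathbb{R}$ with $\sigma_{xy}f(y)-f(x)\neq0$ for every neighbor $y\sim x$ ($\frac1N=0$ if $N=\infty$). *)

theory Defs
  imports "HOL-Library.Extended_Real"
begin

definition signed_graph :: "('a \<Rightarrow> 'a \<Rightarrow> bool) \<Rightarrow> ('a \<Rightarrow> 'a \<Rightarrow> real) \<Rightarrow> bool" where
  "signed_graph adj \<sigma> \<longleftrightarrow>
     (\<forall>x y. adj x y \<longrightarrow> adj y x) \<and> (\<forall>x. \<not> adj x x) \<and>
     (\<forall>x. finite {y. adj x y}) \<and>
     (\<forall>x y. adj x y \<longrightarrow> \<sigma> x y = \<sigma> y x \<and> (\<sigma> x y = 1 \<or> \<sigma> x y = -1))"

definition nbrs :: "('a \<Rightarrow> 'a \<Rightarrow> bool) \<Rightarrow> 'a \<Rightarrow> 'a set" where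
  "nbrs adj x = {y. adj x y}"

definition deg :: "('a \<Rightarrow> 'a \<Rightarrow> bool) \<Rightarrow> 'a \<Rightarrow> real" where
  "deg adj x = real (card (nbrs adj x))"

definition ppow :: "real \<Rightarrow> real \<Rightarrow> real" where
  "ppow p t = (if t = 0 then 0 else \<bar>t\<bar> powr (p - 2) * t)"

text \<open>|t|^q with the usual convention 0^0 = 1 (and 0^q = 0 for q > 0).\<close>
definition apow :: "real \<Rightarrow> real \<Rightarrow> real" where
  "apow t q = (if t = 0 then (if q = 0 then 1 else 0) else \<bar>t\<bar> powr q)"

definition sLap :: "('a \<Rightarrow> 'a \<Rightarrow> bool) \<Rightarrow> ('a \<Rightarrow> 'a \<Rightarrow> real) \<Rightarrow> real \<Rightarrow> ('a \<Rightarrow> real) \<Rightarrow> 'a \<Rightarrow> real" where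
  "sLap adj \<sigma> p f x = (1 / deg adj x) * (\<Sum>y\<in>nbrs adj x. ppow p (\<sigma> x y * f y - f x))"

definition sGamma :: "('a \<Rightarrow> 'a \<Rightarrow> bool) \<Rightarrow> ('a \<Rightarrow> 'a \<Rightarrow> real) \<Rightarrow> real \<Rightarrow> ('a \<Rightarrow> real) \<Rightarrow> ('a \<Rightarrow> real) \<Rightarrow> 'a \<Rightarrow> real" where
  "sGamma adj \<sigma> p f g x = (1 / (2 * deg adj x)) *
     (\<Sum>y\<in>nbrs adj x. ppow p (\<sigma> x y * f y - f x) * (\<sigma> x y * g y - g x))"

definition sL :: "('a \<Rightarrow> 'a \<Rightarrow> bool) \<Rightarrow> ('a \<Rightarrow> 'a \<Rightarrow> real) \<Rightarrow> real \<Rightarrow> ('a \<Rightarrow> real) \<Rightarrow> ('a \<Rightarrow> real) \<Rightarrow> 'a \<Rightarrow> real" where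
  "sL adj \<sigma> p f \<phi> x = (1 / deg adj x) *
     (\<Sum>y\<in>nbrs adj x. apow (\<sigma> x y * f y - f x) (p - 2) * (\<phi> y - \<phi> x))"

definition sGamma2 :: "('a \<Rightarrow> 'a \<Rightarrow> bool) \<Rightarrow> ('a \<Rightarrow> 'a \<Rightarrow> real) \<Rightarrow> real \<Rightarrow> ('a \<Rightarrow> real) \<Rightarrow> 'a \<Rightarrow> real" where
  "sGamma2 adj \<sigma> p f x =
     (1/2) * sL adj \<sigma> p f (sGamma adj \<sigma> p f f) x - sGamma adj \<sigma> p f (sLap adj \<sigma> p f) x"

definition invN :: "ereal \<Rightarrow> real" where
  "invN N = (if N = \<infinity> then 0 else 1 / real_of_ereal N)"

definition CD_ineq :: "('a \<Rightarrow> 'a \<Rightarrow> bool) \<Rightarrow> ('a \<Rightarrow> 'a \<Rightarrow> real) \<Rightarrow> real \<Rightarrow> real \<Rightarrow> ereal \<Rightarrow> ('a \<Rightarrow> real) \<Rightarrow> 'a \<Rightarrow> bool" where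
  "CD_ineq adj \<sigma> p K N f x \<longleftrightarrow>
     sGamma2 adj \<sigma> p f x \<ge> invN N * (sLap adj \<sigma> p f x)^2
        + K * (sGamma adj \<sigma> p f f x) powr ((2 * p - 2) / p)"

definition CD_at :: "('a \<Rightarrow> 'a \<Rightarrow> bool) \<Rightarrow> ('a \<Rightarrow> 'a \<Rightarrow> real) \<Rightarrow> real \<Rightarrow> real \<Rightarrow> ereal \<Rightarrow> 'a \<Rightarrow> bool" where
  "CD_at adj \<sigma> p K N x \<longleftrightarrow>
     (\<forall>f. (\<forall>y. adj x y \<longrightarrow> \<sigma> x y * f y - f x \<noteq> 0) \<longrightarrow> CD_ineq adj \<sigma> p K N f x)"

end

theory Submission
  imports Defs
begin

text \<open>Given any f, shift f by e \<sigma>_xy at every neighbour y of x. Every signed difference at x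
then moves by exactly e, so for all small e \<noteq> 0 none of them vanishes and the CD inequality
holds for the shifted function. For p \<ge> 2 the maps t \<mapsto> |t|^(p-2) t and t \<mapsto> |t|^(p-2) are
continuous, hence so are both sides of the inequality as functions of the finitely many
values involved, and letting e \<rightarrow> 0 gives the inequality for f.\<close>

lemma ppow_eq_sgn_times_powr: "ppow p t = sgn t * \<bar>t\<bar> powr (p - 1)"
proof (cases "t = 0")
  case False
  have "\<bar>t\<bar> powr (p - 2) * t = sgn t * (\<bar>t\<bar> * \<bar>t\<bar> powr (p - 2))"
    by (metis abs_mult_sgn mult.commute mult.left_commute)
  also have "\<dots> = sgn t * \<bar>t\<bar> powr (p - 1)"
    by (simp add: powr_mult_base)
  finally show ?thesis
    using False by (simp add: ppow_def)
qed (simp add: ppow_def)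

lemma tendsto_ppow [tendsto_intros]:
  fixes h :: "'b \<Rightarrow> real"
  assumes h: "(h \<longlongrightarrow> L) F" and p: "p > 1"
  shows "((\<lambda>e. ppow p (h e)) \<longlongrightarrow> ppow p L) F"
proof (cases "L = 0")
  case True
  have "((\<lambda>e. \<bar>h e\<bar> powr (p - 1)) \<longlongrightarrow> 0) F"
    using h True p by (auto intro!: tendsto_eq_intros)
  moreover have "\<forall>\<^sub>F e in F. norm (ppow p (h e)) \<le> norm (\<bar>h e\<bar> powr (p - 1)) * 1"
    by (simp add: ppow_eq_sgn_times_powr abs_mult abs_sgn_eq)
  ultimately have "((\<lambda>e. ppow p (h e)) \<longlongrightarrow> 0) F"
    by (rule tendsto_0_le)
  then show ?thesis
    using True by (simp add: ppow_def)
next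
  case False
  then show ?thesis
    unfolding ppow_eq_sgn_times_powr by (intro tendsto_intros h) (use p in auto)
qed

lemma tendsto_apow [tendsto_intros]:
  fixes h :: "'b \<Rightarrow> real"
  assumes h: "(h \<longlongrightarrow> L) F" and q: "q \<ge> 0"
  shows "((\<lambda>e. apow (h e) q) \<longlongrightarrow> apow L q) F"
proof (cases "q = 0")
  case True
  then have "apow t q = 1" for t
    by (simp add: apow_def)
  then show ?thesis
    by simp
next
  case False
  have "apow t q = \<bar>t\<bar> powr q" for t
    using False by (simp add: apow_def)
  then show ?thesis
    by (simp only:) (intro tendsto_intros h, use q False in auto)
qed

lemma tendsto_sLap:
  assumes "\<And>v. ((\<lambda>e. H e v) \<longlongrightarrow> f v) F" and "p > 1"
  shows "((\<lambda>e. sLap adj \<sigma> p (H e) x) \<longlongrightarrow> sLap adj \<sigma> p f x) F"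
  unfolding sLap_def by (intro tendsto_intros assms)

lemma tendsto_sGamma:
  assumes "\<And>v. ((\<lambda>e. H e v) \<longlongrightarrow> f v) F" and "\<And>v. ((\<lambda>e. G e v) \<longlongrightarrow> g v) F" and "p > 1"
  shows "((\<lambda>e. sGamma adj \<sigma> p (H e) (G e) x) \<longlongrightarrow> sGamma adj \<sigma> p f g x) F"
  unfolding sGamma_def by (intro tendsto_intros assms)

lemma tendsto_sL:
  assumes "\<And>v. ((\<lambda>e. H e v) \<longlongrightarrow> f v) F" and "\<And>v. ((\<lambda>e. \<Phi> e v) \<longlongrightarrow> \<phi> v) F" and "p \<ge> 2"
  shows "((\<lambda>e. sL adj \<sigma> p (H e) (\<Phi> e) x) \<longlongrightarrow> sL adj \<sigma> p f \<phi> x) F"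
  unfolding sL_def by (intro tendsto_intros assms) (use assms(3) in simp)

lemma tendsto_sGamma2:
  assumes "\<And>v. ((\<lambda>e. H e v) \<longlongrightarrow> f v) F" and "p \<ge> 2"
  shows "((\<lambda>e. sGamma2 adj \<sigma> p (H e) x) \<longlongrightarrow> sGamma2 adj \<sigma> p f x) F"
  unfolding sGamma2_def
  using assms by (intro tendsto_intros tendsto_sL tendsto_sGamma tendsto_sLap) auto

lemma sGamma_nonneg: "0 \<le> sGamma adj \<sigma> p f f x"
proof -
  have "0 \<le> ppow p t * t" for t
    by (simp add: ppow_def mult.assoc)
  then show ?thesis
    unfolding sGamma_def deg_def by (intro mult_nonneg_nonneg[OF _ sum_nonneg]) simp_all
qed

lemma CD_ineq_limit:
  assumes lim: "\<And>v. ((\<lambda>e. H e v) \<longlongrightarrow> f v) F" and "F \<noteq> bot" and p: "p \<ge> 2"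
    and "\<forall>\<^sub>F e in F. CD_ineq adj \<sigma> p K N (H e) x"
  shows "CD_ineq adj \<sigma> p K N f x"
proof -
  have "((\<lambda>e. invN N * (sLap adj \<sigma> p (H e) x)\<^sup>2
            + K * sGamma adj \<sigma> p (H e) (H e) x powr ((2 * p - 2) / p))
        \<longlongrightarrow> invN N * (sLap adj \<sigma> p f x)\<^sup>2 + K * sGamma adj \<sigma> p f f x powr ((2 * p - 2) / p)) F"
    using p by (intro tendsto_intros tendsto_sLap tendsto_sGamma lim) (auto simp: sGamma_nonneg)
  with tendsto_sGamma2[OF lim p] show ?thesis
    using assms(2,4) unfolding CD_ineq_def by (intro tendsto_le) auto
qed

definition shift_nbrs :: "('a \<Rightarrow> 'a \<Rightarrow> bool) \<Rightarrow> ('a \<Rightarrow> 'a \<Rightarrow> real) \<Rightarrow> 'a \<Rightarrow> real \<Rightarrow> ('a \<Rightarrow> real) \<Rightarrow> 'a \<Rightarrow> real" where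
  "shift_nbrs adj \<sigma> x e f v = (if adj x v then f v + e * \<sigma> x v else f v)"

lemma tendsto_shift_nbrs: "((\<lambda>e. shift_nbrs adj \<sigma> x e f v) \<longlongrightarrow> f v) (at 0)"
  unfolding shift_nbrs_def by (cases "adj x v") (auto intro!: tendsto_eq_intros)

lemma signed_difference_shift_nbrs:
  assumes G: "signed_graph adj \<sigma>" and "adj x y"
  shows "\<sigma> x y * shift_nbrs adj \<sigma> x e f y - shift_nbrs adj \<sigma> x e f x = \<sigma> x y * f y - f x + e"
proof -
  have "\<sigma> x y = 1 \<or> \<sigma> x y = -1" and "\<not> adj x x"
    using G \<open>adj x y\<close> unfolding signed_graph_def by auto
  then have "\<sigma> x y * \<sigma> x y = 1" and "\<not> adj x x"
    by auto
  then show ?thesis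
    using \<open>adj x y\<close> unfolding shift_nbrs_def by (simp add: algebra_simps)
qed

lemma eventually_signed_differences_shift_nbrs_nonzero:
  assumes G: "signed_graph adj \<sigma>"
  shows "\<forall>\<^sub>F e in at 0. \<forall>y. adj x y \<longrightarrow> \<sigma> x y * shift_nbrs adj \<sigma> x e f y - shift_nbrs adj \<sigma> x e f x \<noteq> 0"
proof -
  have "finite {y. adj x y}"
    using G unfolding signed_graph_def by blast
  moreover have "\<forall>\<^sub>F e in at 0. \<sigma> x y * f y - f x + e \<noteq> 0" for y
    using eventually_neq_at_within[of "- (\<sigma> x y * f y - f x)"] by (rule eventually_mono) auto
  ultimately have "\<forall>\<^sub>F e in at 0. \<forall>y\<in>{y. adj x y}. \<sigma> x y * f y - f x + e \<noteq> 0"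
    by (intro eventually_ball_finite) auto
  then show ?thesis
    by (rule eventually_mono) (simp add: signed_difference_shift_nbrs[OF G])
qed

theorem proposition4p9:
  fixes adj :: "'a \<Rightarrow> 'a \<Rightarrow> bool" and \<sigma> :: "'a \<Rightarrow> 'a \<Rightarrow> real"
    and p K :: real and N :: ereal and x :: 'a
  assumes "signed_graph adj \<sigma>" and "p \<ge> 2" and "N > 0"
  shows "CD_at adj \<sigma> p K N x \<longleftrightarrow> (\<forall>f. CD_ineq adj \<sigma> p K N f x)"
proof
  assume CD: "CD_at adj \<sigma> p K N x"
  show "\<forall>f. CD_ineq adj \<sigma> p K N f x"
  proof
    fix f
    have "\<forall>\<^sub>F e in at 0. CD_ineq adj \<sigma> p K N (shift_nbrs adj \<sigma> x e f) x"
      using eventually_signed_differences_shift_nbrs_nonzero[OF assms(1), of x f]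
      by (rule eventually_mono) (use CD in \<open>simp add: CD_at_def\<close>)
    then show "CD_ineq adj \<sigma> p K N f x"
      by (intro CD_ineq_limit[OF tendsto_shift_nbrs _ assms(2)]) simp_all
  qed
qed (simp add: CD_at_def)

end
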